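(* Let $(M,d)$ be a pointed metric space, let $A\subseteq \widetilde{M}$ and let $\gamma\in(0,1]$. Then $A$ is $\gamma$-cyclically monotonic if and only if there exists $f\in B_{\mathrm{Lip}_0(M)}$ such that $f(m_{x,y})\geq \gamma$ for all $(x,y)\in A$.
   Context: $(M,d)$ is a metric space with a distinguished base point $0$. $\mathrm{Lip}_0(M)$ is the real Banach space of Lipschitz functions $f\colon M\to\mathbb{R}$ with $f(0)=0$, with norm $\|f\|=\sup\{|f(x)-f(y)|/d(x,y): x\neq y\}$; $B_{\mathrm{Lip}_0(M)}$ is its closed unit ball. $\widetilde{M}=\{(x,y)\in M\times M: x\neq y\}$. For $(x,y)\in\widetilde M$, $m_{x,y}=(\delta_x-\delta_y)/d(x,y)\in\mathrm{Lip}_0(M)^*$, where $\delta_x(f)=f(x)$; thus $f(m_{x,y})=(f(x)-f(y))/d(x,y)$. For $\gamma\in(0,1]$, a set $A\subseteq\widetilde M$ is called $\gamma$-cyclically monotonic if for every finite sequence of pairs $(x_1,y_1),\dots,(x_n,y_n)\in A$, setting $y_{n+1}=y_1$, one has $\sum_{i=1}^n \min\{d(x_i,y_{i+1})-\gamma d(x_i,y_i),\, d(y_i,y_{i+1})\}\geq 0$. *)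

theory Defs
  imports "HOL-Analysis.Analysis"
begin

text \<open>The set of pairs of distinct points of M (written M-tilde in the paper).\<close>
definition off_diag :: "'a set \<Rightarrow> ('a \<times> 'a) set" where
  "off_diag M = {(x, y). x \<in> M \<and> y \<in> M \<and> x \<noteq> y}"

text \<open>Closed unit ball of Lip_0(M) with base point z: functions vanishing at z with
  Lipschitz constant at most 1 on M (values outside M are irrelevant).\<close>
definition lip0_ball :: "'a set \<Rightarrow> ('a \<Rightarrow> 'a \<Rightarrow> real) \<Rightarrow> 'a \<Rightarrow> ('a \<Rightarrow> real) set" where
  "lip0_ball M d z = {f. f z = 0 \<and> (\<forall>x\<in>M. \<forall>y\<in>M. \<bar>f x - f y\<bar> \<le> d x y)}"

definition molecule_eval :: "('a \<Rightarrow> 'a \<Rightarrow> real) \<Rightarrow> ('a \<Rightarrow> real) \<Rightarrow> 'a \<Rightarrow> 'a \<Rightarrow> real" where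
  "molecule_eval d f x y = (f x - f y) / d x y"

text \<open>gamma-cyclic monotonicity; a finite sequence (x_1,y_1),...,(x_n,y_n) is indexed
  by 0..n-1, and y_{n+1} = y_1 becomes index (i+1) mod n.\<close>
definition gamma_cyc_mono :: "('a \<Rightarrow> 'a \<Rightarrow> real) \<Rightarrow> real \<Rightarrow> ('a \<times> 'a) set \<Rightarrow> bool" where
  "gamma_cyc_mono d \<gamma> A \<longleftrightarrow>
     (\<forall>n::nat. \<forall>p::nat \<Rightarrow> 'a \<times> 'a. n > 0 \<longrightarrow> (\<forall>i<n. p i \<in> A) \<longrightarrow>
        (\<Sum>i<n. min (d (fst (p i)) (snd (p ((i + 1) mod n))) - \<gamma> * d (fst (p i)) (snd (p i)))
                     (d (snd (p i)) (snd (p ((i + 1) mod n))))) \<ge> 0)"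

end

theory Submission
  imports Defs
begin

text \<open>Necessity: if f is 1-Lipschitz with f x - f y \<ge> \<gamma> d(x,y) on A, then each summand of the
  cyclic sum dominates f(y_i) - f(y_{i+1}), and these telescope to 0.

  Sufficiency is a Rockafellar-type construction. A walk from the base point z to u runs
  z \<rightarrow> y_0 \<leadsto> x_0 \<rightarrow> y_1 \<leadsto> x_1 \<rightarrow> \<dots> \<leadsto> x_{n-1} \<rightarrow> u with (x_i, y_i) \<in> A; a step a \<rightarrow> b costs
  d(a,b) and a traversal y_i \<leadsto> x_i earns \<gamma> d(x_i,y_i). By \<gamma>-cyclic monotonicity and the
  triangle inequality closed walks have nonnegative cost, so minus the infimum of the costs of
  walks ending at u is a well-defined function. Extending a walk by one step makes it
  1-Lipschitz, extending it by one pair gives the slope bound on A. Neither direction uses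
  0 < \<gamma> \<le> 1.\<close>

lemma sum_lessThan_Suc_wrap:
  "(\<Sum>i<Suc m. f i ((i + 1) mod Suc m)) = (\<Sum>i<m. f i (Suc i)) + f m 0"
proof -
  have "(\<Sum>i<m. f i ((i + 1) mod Suc m)) = (\<Sum>i<m. f i (Suc i))"
    by (rule sum.cong) auto
  then show ?thesis by simp
qed

lemma sum_cyclic_shift:
  fixes h :: "nat \<Rightarrow> 'a::comm_monoid_add"
  assumes "0 < n"
  shows "(\<Sum>i<n. h ((i + 1) mod n)) = (\<Sum>i<n. h i)"
proof -
  obtain m where n: "n = Suc m" using assms by (cases n) auto
  have "(\<Sum>i<n. h ((i + 1) mod n)) = (\<Sum>i<m. h (Suc i)) + h 0"
    using sum_lessThan_Suc_wrap[of "\<lambda>_ j. h j" m] by (simp add: n)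
  also have "\<dots> = (\<Sum>i<n. h i)"
    unfolding n sum.lessThan_Suc_shift by (rule add.commute)
  finally show ?thesis .
qed

lemma gamma_cyc_mono_if_slope_bound:
  assumes lip: "\<And>x y. x \<in> M \<Longrightarrow> y \<in> M \<Longrightarrow> f x - f y \<le> d x y"
    and A: "A \<subseteq> M \<times> M"
    and slope: "\<And>x y. (x, y) \<in> A \<Longrightarrow> \<gamma> * d x y \<le> f x - f y"
  shows "gamma_cyc_mono d \<gamma> A"
  unfolding gamma_cyc_mono_def
proof (intro allI impI)
  fix n :: nat and p :: "nat \<Rightarrow> 'a \<times> 'a"
  assume n: "0 < n" and p: "\<forall>i<n. p i \<in> A"
  let ?x = "\<lambda>i. fst (p i)" and ?y = "\<lambda>i. snd (p i)" and ?s = "\<lambda>i. (i + 1) mod n"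
  have "f (?y i) - f (?y (?s i))
      \<le> min (d (?x i) (?y (?s i)) - \<gamma> * d (?x i) (?y i)) (d (?y i) (?y (?s i)))" if "i < n" for i
  proof -
    have pairs: "p i \<in> A" "p (?s i) \<in> A" using p n that by auto
    then have "?x i \<in> M" "?y i \<in> M" "?y (?s i) \<in> M" using A by (auto simp: mem_Times_iff)
    then show ?thesis
      using pairs lip[of "?x i" "?y (?s i)"] lip[of "?y i" "?y (?s i)"] slope[of "?x i" "?y i"] by auto
  qed
  then have "(\<Sum>i<n. f (?y i) - f (?y (?s i)))
      \<le> (\<Sum>i<n. min (d (?x i) (?y (?s i)) - \<gamma> * d (?x i) (?y i)) (d (?y i) (?y (?s i))))"
    by (intro sum_mono) auto
  moreover have "(\<Sum>i<n. f (?y i) - f (?y (?s i))) = 0"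
    using sum_cyclic_shift[OF n, of "\<lambda>i. f (?y i)"] by (simp add: sum_subtractf)
  ultimately show "0 \<le> (\<Sum>i<n. min (d (?x i) (?y (?s i)) - \<gamma> * d (?x i) (?y i)) (d (?y i) (?y (?s i))))"
    by simp
qed

fun walk_cost :: "('a \<Rightarrow> 'a \<Rightarrow> real) \<Rightarrow> real \<Rightarrow> 'a \<Rightarrow> (nat \<Rightarrow> 'a \<times> 'a) \<Rightarrow> nat \<Rightarrow> 'a \<Rightarrow> real" where
  "walk_cost d \<gamma> z p 0 u = d z u"
| "walk_cost d \<gamma> z p (Suc n) u =
     walk_cost d \<gamma> z p n (snd (p n)) - \<gamma> * d (fst (p n)) (snd (p n)) + d (fst (p n)) u"

lemma walk_cost_cong:
  "(\<And>i. i < n \<Longrightarrow> p i = q i) \<Longrightarrow> walk_cost d \<gamma> z p n u = walk_cost d \<gamma> z q n u"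
  by (induction n arbitrary: u) simp_all

lemma walk_cost_Suc_eq_sums:
  "walk_cost d \<gamma> z p (Suc n) u =
     d z (snd (p 0)) + (\<Sum>i<n. d (fst (p i)) (snd (p (Suc i))))
     - (\<Sum>i<Suc n. \<gamma> * d (fst (p i)) (snd (p i))) + d (fst (p n)) u"
  by (induction n arbitrary: u) simp_all

lemma (in Metric_space) walk_cost_triangle:
  assumes "z \<in> M" "\<forall>i<n. p i \<in> M \<times> M" "u \<in> M" "v \<in> M"
  shows "walk_cost d \<gamma> z p n v \<le> walk_cost d \<gamma> z p n u + d u v"
  using assms by (cases n) (auto intro: triangle simp: mem_Times_iff)

locale gamma_cyc_mono_pairs = Metric_space M d
  for M :: "'a set" and d +
  fixes z :: 'a and A :: "('a \<times> 'a) set" and \<gamma> :: real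
  assumes base_in: "z \<in> M" and pairs_in: "A \<subseteq> M \<times> M"
    and cyc_mono: "gamma_cyc_mono d \<gamma> A"
begin

lemma walk_cost_closed_nonneg:
  assumes p: "\<forall>i<n. p i \<in> A"
  shows "0 \<le> walk_cost d \<gamma> z p n z"
proof (cases n)
  case 0
  then show ?thesis by simp
next
  case (Suc m)
  let ?x = "\<lambda>i. fst (p i)" and ?y = "\<lambda>i. snd (p i)"
  have "0 \<le> (\<Sum>i<n. min (d (?x i) (?y ((i + 1) mod n)) - \<gamma> * d (?x i) (?y i))
                          (d (?y i) (?y ((i + 1) mod n))))"
    using cyc_mono p Suc unfolding gamma_cyc_mono_def by blast
  also have "\<dots> \<le> (\<Sum>i<n. d (?x i) (?y ((i + 1) mod n)) - \<gamma> * d (?x i) (?y i))"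
    by (intro sum_mono) simp
  also have "\<dots> = (\<Sum>i<m. d (?x i) (?y (Suc i))) + d (?x m) (?y 0) - (\<Sum>i<n. \<gamma> * d (?x i) (?y i))"
    using sum_lessThan_Suc_wrap[of "\<lambda>i j. d (?x i) (?y j)" m] by (simp add: Suc sum_subtractf)
  finally have "0 \<le> (\<Sum>i<m. d (?x i) (?y (Suc i))) + d (?x m) (?y 0) - (\<Sum>i<n. \<gamma> * d (?x i) (?y i))" .
  moreover have "d (?x m) (?y 0) \<le> d (?x m) z + d z (?y 0)"
    using p pairs_in base_in Suc by (intro triangle) (auto simp: mem_Times_iff)
  ultimately show ?thesis
    by (simp add: Suc walk_cost_Suc_eq_sums del: walk_cost.simps)
qed

lemma walk_cost_ge_neg_dist:
  assumes "u \<in> M" and "\<forall>i<n. p i \<in> A"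
  shows "- d u z \<le> walk_cost d \<gamma> z p n u"
proof -
  have "walk_cost d \<gamma> z p n z \<le> walk_cost d \<gamma> z p n u + d u z"
    using assms pairs_in base_in by (intro walk_cost_triangle) auto
  then show ?thesis
    using walk_cost_closed_nonneg[OF assms(2)] by linarith
qed

definition walk_costs :: "'a \<Rightarrow> real set" where
  "walk_costs u = {walk_cost d \<gamma> z p n u | p n. \<forall>i<n. p i \<in> A}"

definition potential :: "'a \<Rightarrow> real" where
  "potential u = - Inf (walk_costs u)"

lemma potential_ge:
  assumes "u \<in> M" and "\<forall>i<n. p i \<in> A"
  shows "- walk_cost d \<gamma> z p n u \<le> potential u"
proof -
  have "bdd_below (walk_costs u)"
    using walk_cost_ge_neg_dist[OF \<open>u \<in> M\<close>] unfolding walk_costs_def bdd_below_def by blast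
  moreover have "walk_cost d \<gamma> z p n u \<in> walk_costs u"
    using assms(2) unfolding walk_costs_def by blast
  ultimately show ?thesis
    unfolding potential_def by (simp add: cInf_lower)
qed

lemma potential_le:
  assumes "\<And>p n. \<forall>i<n. p i \<in> A \<Longrightarrow> b \<le> walk_cost d \<gamma> z p n u"
  shows "potential u \<le> - b"
proof -
  have "walk_cost d \<gamma> z p 0 u \<in> walk_costs u" for p
    unfolding walk_costs_def by blast
  then have "b \<le> Inf (walk_costs u)"
    using assms by (intro cInf_greatest) (auto simp: walk_costs_def)
  then show ?thesis
    unfolding potential_def by simp
qed

lemma potential_base: "potential z = 0"
  using potential_ge[of z 0] potential_le[of 0 z] walk_cost_closed_nonneg base_in by fastforce

lemma potential_lipschitz:
  assumes "u \<in> M" and "v \<in> M"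
  shows "potential u - potential v \<le> d u v"
proof -
  have "potential u \<le> - (- potential v - d u v)"
  proof (rule potential_le)
    fix p :: "nat \<Rightarrow> 'a \<times> 'a" and n :: nat
    assume p: "\<forall>i<n. p i \<in> A"
    then have "walk_cost d \<gamma> z p n v \<le> walk_cost d \<gamma> z p n u + d u v"
      using assms base_in pairs_in by (intro walk_cost_triangle) auto
    then show "- potential v - d u v \<le> walk_cost d \<gamma> z p n u"
      using potential_ge[OF \<open>v \<in> M\<close> p] by linarith
  qed
  then show ?thesis by simp
qed

lemma potential_slope:
  assumes xy: "(x, y) \<in> A"
  shows "\<gamma> * d x y \<le> potential x - potential y"
proof -
  have x: "x \<in> M" using xy pairs_in by auto
  have "potential y \<le> - (\<gamma> * d x y - potential x)"
  proof (rule potential_le)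
    fix p :: "nat \<Rightarrow> 'a \<times> 'a" and n :: nat
    assume p: "\<forall>i<n. p i \<in> A"
    let ?q = "p(n := (x, y))"
    have "\<forall>i<Suc n. ?q i \<in> A" using p xy by (simp add: less_Suc_eq)
    then have "- walk_cost d \<gamma> z ?q (Suc n) x \<le> potential x"
      by (rule potential_ge[OF x])
    moreover have "walk_cost d \<gamma> z ?q n y = walk_cost d \<gamma> z p n y"
      by (rule walk_cost_cong) simp
    ultimately show "\<gamma> * d x y - potential x \<le> walk_cost d \<gamma> z p n y"
      using x by simp
  qed
  then show ?thesis by simp
qed

lemma potential_in_lip0_ball: "potential \<in> lip0_ball M d z"
  using potential_base potential_lipschitz commute unfolding lip0_ball_def
  by (force simp: abs_le_iff)

end

theorem proposition2p2:
  fixes M :: "'a set" and d :: "'a \<Rightarrow> 'a \<Rightarrow> real" and z :: 'a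
    and A :: "('a \<times> 'a) set" and \<gamma> :: real
  assumes "Metric_space M d" and "z \<in> M"
    and "A \<subseteq> off_diag M"
    and "0 < \<gamma>" and "\<gamma> \<le> 1"
  shows "gamma_cyc_mono d \<gamma> A \<longleftrightarrow>
         (\<exists>f \<in> lip0_ball M d z. \<forall>(x, y) \<in> A. molecule_eval d f x y \<ge> \<gamma>)"
proof -
  interpret Metric_space M d by fact
  have pairs_in: "A \<subseteq> M \<times> M"
    using assms(3) by (auto simp: off_diag_def)
  have molecule_iff: "molecule_eval d f x y \<ge> \<gamma> \<longleftrightarrow> \<gamma> * d x y \<le> f x - f y" if "(x, y) \<in> A" for f x y
    using that assms(3) by (auto simp: off_diag_def molecule_eval_def pos_le_divide_eq)
  show ?thesis
  proof
    assume "gamma_cyc_mono d \<gamma> A"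
    then interpret gamma_cyc_mono_pairs M d z A \<gamma>
      using assms(2) pairs_in by unfold_locales
    show "\<exists>f \<in> lip0_ball M d z. \<forall>(x, y) \<in> A. molecule_eval d f x y \<ge> \<gamma>"
      using potential_in_lip0_ball potential_slope molecule_iff by blast
  next
    assume "\<exists>f \<in> lip0_ball M d z. \<forall>(x, y) \<in> A. molecule_eval d f x y \<ge> \<gamma>"
    then obtain f where "f \<in> lip0_ball M d z" and "\<forall>(x, y) \<in> A. molecule_eval d f x y \<ge> \<gamma>"
      by blast
    then show "gamma_cyc_mono d \<gamma> A"
      using pairs_in molecule_iff
      by (intro gamma_cyc_mono_if_slope_bound[of M f d A]) (auto simp: lip0_ball_def abs_le_iff)
  qed
qed

end
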